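(* Let $k\in\mathbb{Z}$. For every integer $n\ge 1$, $$\frac{2}{n}\sum_{m=1}^{n}\frac{1}{m^{k-1}}S_{1}(n,m)=E_{n-1}^{(k)}(1)+E_{n-1}^{(k)}.$$
   Context: For $k\in\mathbb{Z}$, $\mathrm{Ei}_k(x)=\sum_{n=1}^{\infty}\frac{x^n}{n^k(n-1)!}$. The poly-Genocchi polynomials $G_n^{(k)}(x)$ are defined by $\frac{2\,\mathrm{Ei}_k(\log(1+t))}{e^t+1}e^{xt}=\sum_{n=0}^{\infty}G_n^{(k)}(x)\frac{t^n}{n!}$. The poly-Euler polynomials of index $k$ are $E_n^{(k)}(x)=\frac{G_{n+1}^{(k)}(x)}{n+1}$ for $n\ge0$, and $E_n^{(k)}=E_n^{(k)}(0)$. $S_1(n,m)$ denotes the signed Stirling numbers of the first kind: $\frac{(\log(1+t))^m}{m!}=\sum_{n=m}^{\infty}S_1(n,m)\frac{t^n}{n!}$. *)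

theory Defs
  imports "HOL-Computational_Algebra.Formal_Power_Series"
begin

definition Ei_fps :: "int \<Rightarrow> real fps" where
  "Ei_fps k = Abs_fps (\<lambda>n. if n = 0 then 0 else 1 / ((real n powi k) * fact (n - 1)))"

text \<open>log(1+t) as a formal power series is fps_ln 1.
  Generating function 2 Ei_k(log(1+t)) / (e^t + 1) * e^{xt}.\<close>
definition polyGenocchi_gf :: "int \<Rightarrow> real \<Rightarrow> real fps" where
  "polyGenocchi_gf k x =
     2 * (Ei_fps k oo fps_ln 1) * inverse (fps_exp 1 + 1) * fps_exp x"

definition polyGenocchi :: "int \<Rightarrow> nat \<Rightarrow> real \<Rightarrow> real" where
  "polyGenocchi k n x = fact n * fps_nth (polyGenocchi_gf k x) n"

definition polyEuler :: "int \<Rightarrow> nat \<Rightarrow> real \<Rightarrow> real" where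
  "polyEuler k n x = polyGenocchi k (n + 1) x / real (n + 1)"

text \<open>Signed Stirling numbers of the first kind via (log(1+t))^m/m! = sum_n S1(n,m) t^n/n!.\<close>
definition S1 :: "nat \<Rightarrow> nat \<Rightarrow> real" where
  "S1 n m = fact n * fps_nth ((fps_ln 1) ^ m / fps_const (fact m)) n"

end

theory Submission
  imports Defs
begin

text \<open>Shifting x to x + 1 multiplies the generating function e^(xt) 2 Ei_k(log(1 + t)) / (e^t + 1)
  by e^t, so the generating functions at x + 1 and at x add up to 2 Ei_k(log(1 + t)) e^(xt).
  At x = 0 the n-th coefficient of Ei_k(log(1 + t)) is the sum over m of the m-th coefficient
  of Ei_k times the n-th coefficient of (log(1 + t))^m = m! S1(n, m) / n!, and the factor
  m / m^k = 1 / m^(k-1) comes from m! / (m - 1)!.\<close>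

lemma polyGenocchi_gf_shift_add:
  "polyGenocchi_gf k (x + 1) + polyGenocchi_gf k x = 2 * (Ei_fps k oo fps_ln 1) * fps_exp x"
proof -
  have "polyGenocchi_gf k (x + 1) + polyGenocchi_gf k x
      = 2 * (Ei_fps k oo fps_ln 1) * fps_exp x * (inverse (fps_exp 1 + 1) * (fps_exp 1 + 1))"
    unfolding polyGenocchi_gf_def fps_exp_add_mult[of x 1] by algebra
  also have "inverse (fps_exp (1::real) + 1) * (fps_exp 1 + 1) = 1"
    by (simp add: inverse_mult_eq_1)
  finally show ?thesis
    by simp
qed

lemma polyEuler_eq_fps_nth: "polyEuler k n x = fact n * fps_nth (polyGenocchi_gf k x) (Suc n)"
  by (simp add: polyEuler_def polyGenocchi_def field_simps del: of_nat_Suc)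

lemma fps_nth_fps_ln_power: "fps_nth (fps_ln 1 ^ m) n = fact m * S1 n m / fact n"
  by (simp add: S1_def)

lemma fps_nth_Ei_fps:
  "m \<ge> 1 \<Longrightarrow> fps_nth (Ei_fps k) m = 1 / (real m powi k * fact (m - 1))"
  by (simp add: Ei_fps_def)

lemma fps_nth_Ei_fps_compose_fps_ln:
  "fps_nth (Ei_fps k oo fps_ln 1) n = (\<Sum>m = 1..n. 1 / real m powi (k - 1) * S1 n m) / fact n"
proof -
  have summand: "fps_nth (Ei_fps k) m * fps_nth (fps_ln 1 ^ m) n
      = 1 / real m powi (k - 1) * S1 n m / fact n" if "m \<ge> 1" for m
  proof -
    have "real m powi k = real m powi (k - 1) * real m"
      using that by (simp add: power_int_minus_mult)
    moreover have "(fact m :: real) = real m * fact (m - 1)"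
      using that by (simp add: fact_reduce)
    ultimately show ?thesis
      using that by (simp add: fps_nth_Ei_fps fps_nth_fps_ln_power)
  qed
  have "fps_nth (Ei_fps k oo fps_ln 1) n
      = (\<Sum>m = 1..n. fps_nth (Ei_fps k) m * fps_nth (fps_ln 1 ^ m) n)"
    by (simp add: fps_compose_nth sum.atLeast_Suc_atMost Ei_fps_def)
  also have "\<dots> = (\<Sum>m = 1..n. 1 / real m powi (k - 1) * S1 n m / fact n)"
    by (simp add: summand)
  finally show ?thesis
    by (simp add: sum_divide_distrib)
qed

theorem corollary2:
  fixes k :: int and n :: nat
  assumes "n \<ge> 1"
  shows "2 / real n * (\<Sum>m = 1..n. (1 / (real m powi (k - 1))) * S1 n m)
           = polyEuler k (n - 1) 1 + polyEuler k (n - 1) 0"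
proof -
  obtain j where n: "n = Suc j"
    using assms by (cases n) auto
  have "polyEuler k j 1 + polyEuler k j 0
      = fact j * fps_nth (polyGenocchi_gf k (0 + 1) + polyGenocchi_gf k 0) n"
    by (simp add: polyEuler_eq_fps_nth n algebra_simps)
  also have "\<dots> = 2 * fact j * fps_nth (Ei_fps k oo fps_ln 1) n"
    unfolding polyGenocchi_gf_shift_add by (simp add: numeral_fps_const)
  also have "\<dots> = 2 / real n * (\<Sum>m = 1..n. 1 / real m powi (k - 1) * S1 n m)"
    unfolding fps_nth_Ei_fps_compose_fps_ln by (simp add: n field_simps del: of_nat_Suc)
  finally show ?thesis
    by (simp add: n)
qed

end
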